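(* Let $g\in L^1([0,1])$ with $g\ge 0$, let $m\in\mathbb{N}$, $A\in D_m$, and $\lambda\in(0,1)$. Then there exists an integer $n_\lambda>m$ such that for every $n\ge n_\lambda$ there are sets $A_0,A_1\in D_n$ with $A=A_0\cup A_1$ (disjoint) satisfying: (1) $\mu(A_0)=\mu(A_1)=\tfrac12\mu(A)$; (2) $\tfrac{\lambda}{2}\int_A g\,d\mu\le\int_{A_i}g\,d\mu\le\tfrac{1}{2\lambda}\int_A g\,d\mu$ for $i=0,1$; (3) $r_n\equiv(-1)^i$ on $A_i$ for $i=0,1$.
   Context: $\mu$ is Lebesgue measure on $[0,1]$. $r_n(x)=\operatorname{sign}(\sin(2^n\pi x))$ are the Rademacher functions. For $m\in\mathbb{N}$, $D_m$ denotes the family of all sets $A\subset[0,1]$ that are finite unions of dyadic intervals $[j/2^m,(j+1)/2^m)$, $j\in\{0,\dots,2^m-1\}$. *)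

theory Defs
  imports "HOL-Analysis.Analysis"
begin

definition rademacher :: "nat \<Rightarrow> real \<Rightarrow> real" where
  "rademacher n x = sgn (sin (2 ^ n * pi * x))"

definition dyadic_interval :: "nat \<Rightarrow> nat \<Rightarrow> real set" where
  "dyadic_interval m j = {real j / 2 ^ m ..< (real j + 1) / 2 ^ m}"

definition dyadic_sets :: "nat \<Rightarrow> real set set" where
  "dyadic_sets m = {(\<Union>j\<in>J. dyadic_interval m j) | J. J \<subseteq> {..<2 ^ m}}"

end

theory Submission
  imports Defs
begin

(* For A in D_m and n > m, the halves are A0 = {x in A. floor (2^n x) even} and
   A1 = {x in A. floor (2^n x) odd}.  Both lie in D_n, they have equal measure because
   translation by 2^-n maps A0 onto A1, and r_n is 1 on A0 and -1 on A1 away from the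
   (null) set of dyadic rationals.  The difference of the integrals of g over the halves
   is the n-th coefficient of the integrable function 1_A g against the step function
   r_n.  These step functions are orthonormal on [0,1), so by Bessel's inequality the
   coefficients of a bounded function tend to 0, and by truncation the same holds for
   every integrable function (a Riemann-Lebesgue lemma for Rademacher functions).  Hence
   for all large n the two half-integrals differ by at most (1 - lam) times their sum,
   which gives the bounds lam/2 and 1/(2 lam) of the theorem. *)

definition dyadic_index :: "nat \<Rightarrow> real \<Rightarrow> int" where
  "dyadic_index k x = \<lfloor>2 ^ k * x\<rfloor>"

lemma dyadic_index_coarsen:
  assumes "j \<le> k"
  shows "dyadic_index j x = dyadic_index k x div 2 ^ (k - j)"
proof -
  have "(2::real) ^ k = 2 ^ j * 2 ^ (k - j)"
    using assms by (simp add: power_add[symmetric])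
  then have "(2::real) ^ j * x = 2 ^ k * x / real_of_int (2 ^ (k - j))"
    by simp
  then show ?thesis
    unfolding dyadic_index_def using floor_divide_real_eq_div[of "2 ^ (k - j)" "2 ^ k * x"]
    by simp
qed

lemma dyadic_index_shift: "dyadic_index k (x + 1 / 2 ^ k) = dyadic_index k x + 1"
  unfolding dyadic_index_def by (simp add: distrib_left)

lemma even_succ_div_pow:
  fixes a :: int
  assumes "even a" "0 < d"
  shows "(a + 1) div 2 ^ d = a div 2 ^ d"
proof -
  obtain b where b: "a = 2 * b" using assms(1) by blast
  obtain e where e: "d = Suc e" using assms(2) gr0_implies_Suc by blast
  have "(a + 1) div 2 ^ d = (a + 1) div 2 div 2 ^ e" by (simp add: e zdiv_zmult2_eq)
  also have "\<dots> = a div 2 ^ d" using b by (simp add: e zdiv_zmult2_eq)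
  finally show ?thesis .
qed

lemma dyadic_index_shift_coarser:
  assumes "j < k" "even (dyadic_index k x)"
  shows "dyadic_index j (x + 1 / 2 ^ k) = dyadic_index j x"
  using assms by (simp add: dyadic_index_coarsen[of j k] dyadic_index_shift even_succ_div_pow)

lemma dyadic_index_0_eq_0_iff: "dyadic_index 0 x = 0 \<longleftrightarrow> x \<in> {0..<1}"
  unfolding dyadic_index_def by (simp add: floor_eq_iff)

lemma measurable_dyadic_index[measurable]: "Measurable.pred lborel (\<lambda>x. P (dyadic_index k x))"
  unfolding dyadic_index_def by measurable

lemma mem_dyadic_interval_iff: "x \<in> dyadic_interval k j \<longleftrightarrow> dyadic_index k x = int j"
  unfolding dyadic_interval_def dyadic_index_def by (simp add: floor_eq_iff field_simps)

lemma dyadic_sets_of_index: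
  assumes "\<And>z. P z \<Longrightarrow> 0 \<le> z \<and> z < 2 ^ k"
  shows "{x. P (dyadic_index k x)} \<in> dyadic_sets k"
proof -
  define J where "J = {j. j < (2::nat) ^ k \<and> P (int j)}"
  have "{x. P (dyadic_index k x)} = (\<Union>j\<in>J. dyadic_interval k j)"
  proof (intro set_eqI iffI)
    fix x assume "x \<in> {x. P (dyadic_index k x)}"
    then have P: "P (dyadic_index k x)" by simp
    with assms have b: "0 \<le> dyadic_index k x" "dyadic_index k x < 2 ^ k" by auto
    then have "nat (dyadic_index k x) < 2 ^ k"
      by (metis nat_less_iff of_nat_numeral of_nat_power)
    then have "nat (dyadic_index k x) \<in> J" using P b by (simp add: J_def)
    moreover have "x \<in> dyadic_interval k (nat (dyadic_index k x))"
      using b by (simp add: mem_dyadic_interval_iff)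
    ultimately show "x \<in> (\<Union>j\<in>J. dyadic_interval k j)" by blast
  qed (auto simp: J_def mem_dyadic_interval_iff)
  moreover have "J \<subseteq> {..<2 ^ k}" by (auto simp: J_def)
  ultimately show ?thesis unfolding dyadic_sets_def by blast
qed

lemma dyadic_sets_index_form:
  assumes "A \<in> dyadic_sets m"
  obtains J where "J \<subseteq> {..<2 ^ m}" "A = {x. dyadic_index m x \<in> int ` J}"
proof -
  from assms obtain J where J: "J \<subseteq> {..<2 ^ m}" "A = (\<Union>j\<in>J. dyadic_interval m j)"
    unfolding dyadic_sets_def by blast
  moreover have "(\<Union>j\<in>J. dyadic_interval m j) = {x. dyadic_index m x \<in> int ` J}"
    by (auto simp: mem_dyadic_interval_iff)
  ultimately show thesis using that by simp
qed

lemma dyadic_sets_subset_unit: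
  assumes "A \<in> dyadic_sets m"
  shows "A \<subseteq> {0..<1}"
proof
  fix x assume "x \<in> A"
  with assms obtain j where j: "j < 2 ^ m" "dyadic_index m x = int j"
    by (auto elim!: dyadic_sets_index_form)
  then have "int j < 2 ^ m" by (metis of_nat_less_iff of_nat_numeral of_nat_power)
  then have "dyadic_index 0 x = 0" using dyadic_index_coarsen[of 0 m x] j by simp
  then show "x \<in> {0..<1}" by (simp add: dyadic_index_0_eq_0_iff)
qed

lemma dyadic_sets_measurable:
  assumes "A \<in> dyadic_sets m"
  shows "A \<in> sets lborel"
  using assms by (auto elim!: dyadic_sets_index_form simp: pred_def[symmetric])

lemma dyadic_sets_refine:
  assumes A: "A \<in> dyadic_sets m" and "m \<le> n"
  shows "A \<inter> {x. P (dyadic_index n x)} \<in> dyadic_sets n"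
proof -
  obtain J where "A = {x. dyadic_index m x \<in> int ` J}"
    using A by (rule dyadic_sets_index_form)
  moreover have "A \<subseteq> {x. dyadic_index n x div 2 ^ n = 0}"
  proof
    fix x assume "x \<in> A"
    then have "dyadic_index 0 x = 0"
      using dyadic_sets_subset_unit[OF A] dyadic_index_0_eq_0_iff by blast
    then show "x \<in> {x. dyadic_index n x div 2 ^ n = 0}"
      using dyadic_index_coarsen[of 0 n x] by simp
  qed
  ultimately have "A \<inter> {x. P (dyadic_index n x)} = {x. dyadic_index n x div 2 ^ (n - m) \<in> int ` J
      \<and> dyadic_index n x div 2 ^ n = 0 \<and> P (dyadic_index n x)}"
    using dyadic_index_coarsen[of m n] \<open>m \<le> n\<close> by auto
  also have "\<dots> \<in> dyadic_sets n"
  proof (rule dyadic_sets_of_index)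
    fix z :: int
    have pos: "0 < (2::int) ^ n" by simp
    show "z div 2 ^ (n - m) \<in> int ` J \<and> z div 2 ^ n = 0 \<and> P z \<Longrightarrow> 0 \<le> z \<and> z < 2 ^ n"
      by (auto simp: zdiv_eq_0_iff) (use pos in linarith)+
  qed
  finally show ?thesis .
qed

definition rademacher_step :: "nat \<Rightarrow> real \<Rightarrow> real" where
  "rademacher_step k x = (if even (dyadic_index k x) then 1 else -1)"

lemma rademacher_step_measurable[measurable]: "rademacher_step k \<in> borel_measurable lborel"
  unfolding rademacher_step_def by measurable

lemma abs_rademacher_step[simp]: "\<bar>rademacher_step k x\<bar> = 1"
  by (simp add: rademacher_step_def)

lemma rademacher_eq_step:
  assumes "x \<notin> range (\<lambda>z::int. real_of_int z / 2 ^ n)"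
  shows "rademacher n x = rademacher_step n x"
proof -
  define y where "y = 2 ^ n * x"
  define k where "k = dyadic_index n x"
  have k: "k = \<lfloor>y\<rfloor>" by (simp add: k_def y_def dyadic_index_def)
  have "y \<noteq> of_int k"
  proof
    assume "y = of_int k"
    then have "x = of_int k / 2 ^ n" by (simp add: y_def field_simps)
    then show False using assms by auto
  qed
  then have "0 < y - k" "y - k < 1" using k by linarith+
  then have pos: "0 < sin (pi * (y - k))" by (intro sin_gt_zero) auto
  have "sin (2 ^ n * pi * x) = sin (pi * of_int k + pi * (y - k))"
    by (simp add: y_def algebra_simps)
  also have "\<dots> = (if even k then 1 else -1) * sin (pi * (y - k))"
    by (simp add: sin_add)
  finally show ?thesis
    using pos by (simp add: rademacher_def rademacher_step_def k_def[symmetric])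
qed

(* The dyadic rationals are countable, hence the two agree almost everywhere. *)
lemma AE_rademacher_eq_step: "AE x in lborel. rademacher n x = rademacher_step n x"
proof -
  have "AE x in lborel. x \<notin> range (\<lambda>z::int. real_of_int z / 2 ^ n)"
    by (intro AE_not_in countable_imp_null_set_lborel) auto
  then show ?thesis by eventually_elim (rule rademacher_eq_step)
qed

definition even_cells :: "nat \<Rightarrow> real set" where
  "even_cells k = {x. dyadic_index 0 x = 0 \<and> even (dyadic_index k x)}"

definition odd_cells :: "nat \<Rightarrow> real set" where
  "odd_cells k = {x. dyadic_index 0 x = 0 \<and> odd (dyadic_index k x)}"

lemma even_cells_measurable[measurable]: "even_cells k \<in> sets lborel"
  and odd_cells_measurable[measurable]: "odd_cells k \<in> sets lborel"
  unfolding even_cells_def odd_cells_def by measurable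

lemma even_cells_subset: "even_cells k \<subseteq> {0..<1}"
  and odd_cells_subset: "odd_cells k \<subseteq> {0..<1}"
  by (auto simp: even_cells_def odd_cells_def dyadic_index_0_eq_0_iff)

lemma indicator_cells_add:
  "indicator (even_cells k) x + indicator (odd_cells k) x = (indicator {0..<1} x :: real)"
  by (auto simp: indicator_def even_cells_def odd_cells_def dyadic_index_0_eq_0_iff)

lemma indicator_cells_diff:
  "indicator (even_cells k) x - indicator (odd_cells k) x
     = (indicator {0..<1} x * rademacher_step k x :: real)"
  by (auto simp: indicator_def even_cells_def odd_cells_def dyadic_index_0_eq_0_iff
      rademacher_step_def)

lemma shift_mem_odd_cells:
  assumes "0 < k"
  shows "x + 1 / 2 ^ k \<in> odd_cells k \<longleftrightarrow> x \<in> even_cells k"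
proof
  assume "x \<in> even_cells k"
  then show "x + 1 / 2 ^ k \<in> odd_cells k"
    using assms by (auto simp: even_cells_def odd_cells_def dyadic_index_shift
        dyadic_index_shift_coarser)
next
  assume x: "x + 1 / 2 ^ k \<in> odd_cells k"
  then have "even (dyadic_index k x)" by (simp add: odd_cells_def dyadic_index_shift)
  then show "x \<in> even_cells k"
    using x assms dyadic_index_shift_coarser[of 0 k x] by (auto simp: even_cells_def odd_cells_def)
qed

lemma integral_odd_cells_eq_even_cells:
  fixes F :: "real \<Rightarrow> real"
  assumes "0 < k" "\<And>x. even (dyadic_index k x) \<Longrightarrow> F (x + 1 / 2 ^ k) = F x"
  shows "(\<integral>x. indicator (odd_cells k) x * F x \<partial>lborel)
       = (\<integral>x. indicator (even_cells k) x * F x \<partial>lborel)"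
proof -
  have "(\<integral>x. indicator (odd_cells k) x * F x \<partial>lborel)
      = \<bar>1\<bar> *\<^sub>R (\<integral>x. indicator (odd_cells k) (1 / 2 ^ k + 1 * x) * F (1 / 2 ^ k + 1 * x) \<partial>lborel)"
    by (rule lborel_integral_real_affine) simp
  also have "\<dots> = (\<integral>x. indicator (even_cells k) x * F x \<partial>lborel)"
  proof (simp, rule Bochner_Integration.integral_cong[OF refl])
    fix x
    show "indicator (odd_cells k) (1 / 2 ^ k + x) * F (1 / 2 ^ k + x)
        = indicator (even_cells k) x * F x"
      using shift_mem_odd_cells[OF assms(1), of x] assms(2)[of x]
      by (cases "x \<in> even_cells k") (auto simp: indicator_def even_cells_def add.commute)
  qed
  finally show ?thesis .
qed

lemma integrable_bounded_on_unit:
  fixes u :: "real \<Rightarrow> real"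
  assumes [measurable]: "u \<in> borel_measurable lborel"
    and bound: "\<And>x. \<bar>u x\<bar> \<le> B" and supp: "\<And>x. x \<notin> {0..<1} \<Longrightarrow> u x = 0"
  shows "integrable lborel u"
proof (rule Bochner_Integration.integrable_bound)
  show "integrable lborel (\<lambda>x. B * indicator {0..<1::real} x)"
    by (intro integrable_mult_right integrable_real_indicator) auto
  show "AE x in lborel. norm (u x) \<le> norm (B * indicator {0..<1::real} x)"
    using bound supp by (auto simp: indicator_def intro: order_trans[OF _ abs_ge_self])
qed measurable

(* Distinct step functions are orthogonal: the odd cells are a translate of the even ones. *)
lemma rademacher_step_orthogonal:
  assumes "l < k"
  shows "(\<integral>x. indicator {0..<1} x * (rademacher_step k x * rademacher_step l x) \<partial>lborel) = 0"
proof -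
  let ?r = "rademacher_step"
  have integrable_cell: "integrable lborel (\<lambda>x. indicator C x * ?r l x)" if "C \<subseteq> {0..<1}" "C \<in> sets lborel" for C
    by (rule integrable_bounded_on_unit[where B=1]) (use that in \<open>auto simp: abs_mult indicator_def subset_iff\<close>)
  have "(\<integral>x. indicator {0..<1} x * (?r k x * ?r l x) \<partial>lborel)
      = (\<integral>x. indicator (even_cells k) x * ?r l x - indicator (odd_cells k) x * ?r l x \<partial>lborel)"
    by (rule Bochner_Integration.integral_cong[OF refl])
      (metis indicator_cells_diff left_diff_distrib mult.assoc)
  also have "\<dots> = (\<integral>x. indicator (even_cells k) x * ?r l x \<partial>lborel)
                 - (\<integral>x. indicator (odd_cells k) x * ?r l x \<partial>lborel)"
    by (intro Bochner_Integration.integral_diff integrable_cell even_cells_subset odd_cells_subset) measurable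
  also have "(\<integral>x. indicator (odd_cells k) x * ?r l x \<partial>lborel)
           = (\<integral>x. indicator (even_cells k) x * ?r l x \<partial>lborel)"
    by (rule integral_odd_cells_eq_even_cells)
      (use assms in \<open>auto simp: rademacher_step_def dyadic_index_shift_coarser\<close>)
  finally show ?thesis by simp
qed

lemma rademacher_step_orthonormal:
  "(\<integral>x. indicator {0..<1} x * (rademacher_step k x * rademacher_step l x) \<partial>lborel)
     = (if k = l then 1 else 0)"
proof (cases "k = l")
  case True
  then have "(\<lambda>x. indicator {0..<1} x * (rademacher_step k x * rademacher_step l x))
      = indicator {0..<1::real}"
    by (auto simp: rademacher_step_def)
  then show ?thesis using True by simp
next
  case False
  then consider "l < k" | "k < l" by linarith
  then show ?thesis
  proof cases
    case 1
    then show ?thesis by (simp add: rademacher_step_orthogonal)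
  next
    case 2
    then show ?thesis using rademacher_step_orthogonal[of k l] by (simp add: mult.commute)
  qed
qed

lemma bessel_rademacher_step:
  fixes h :: "real \<Rightarrow> real"
  assumes hm[measurable]: "h \<in> borel_measurable lborel" and hb: "\<And>x. \<bar>h x\<bar> \<le> B"
    and N: "finite N"
  defines "c \<equiv> \<lambda>n. (\<integral>x. indicator {0..<1} x * (h x * rademacher_step n x) \<partial>lborel)"
  shows "(\<Sum>n\<in>N. (c n)\<^sup>2) \<le> (\<integral>x. indicator {0..<1} x * (h x)\<^sup>2 \<partial>lborel)"
proof -
  let ?U = "indicator {0..<1::real} :: real \<Rightarrow> real" and ?r = "rademacher_step"
  define \<phi> where "\<phi> x = (\<Sum>n\<in>N. c n * ?r n x)" for x
  have B0: "0 \<le> B" using hb[of 0] by linarith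
  have "(h x)\<^sup>2 \<le> B\<^sup>2" for x
    using power_mono[OF hb abs_ge_zero, of x 2] by simp
  then have i1: "integrable lborel (\<lambda>x. ?U x * (h x)\<^sup>2)"
    by (intro integrable_bounded_on_unit[where B="B\<^sup>2"]) (auto simp: indicator_def)
  have i2: "integrable lborel (\<lambda>x. ?U x * (h x * ?r n x))" for n
    using B0 by (intro integrable_bounded_on_unit[where B=B]) (auto simp: abs_mult hb indicator_def)
  have i3: "integrable lborel (\<lambda>x. ?U x * (?r n x * ?r k x))" for n k
    by (rule integrable_bounded_on_unit[where B=1]) (auto simp: abs_mult)
  have expand: "?U x * (h x - \<phi> x)\<^sup>2 = ?U x * (h x)\<^sup>2 - 2 * (\<Sum>n\<in>N. c n * (?U x * (h x * ?r n x)))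
     + (\<Sum>n\<in>N. \<Sum>k\<in>N. c n * c k * (?U x * (?r n x * ?r k x)))" for x
  proof -
    have a: "h x * \<phi> x = (\<Sum>n\<in>N. c n * (h x * ?r n x))"
      unfolding \<phi>_def by (simp add: sum_distrib_left algebra_simps)
    have b: "\<phi> x * \<phi> x = (\<Sum>n\<in>N. \<Sum>k\<in>N. c n * c k * (?r n x * ?r k x))"
      unfolding \<phi>_def sum_product by (simp add: algebra_simps)
    have "?U x * (h x - \<phi> x)\<^sup>2 = ?U x * (h x)\<^sup>2 - 2 * ?U x * (h x * \<phi> x) + ?U x * (\<phi> x * \<phi> x)"
      by (simp add: power2_eq_square algebra_simps)
    then show ?thesis
      unfolding a b by (simp add: sum_distrib_left algebra_simps)
  qed
  have "0 \<le> (\<integral>x. ?U x * (h x - \<phi> x)\<^sup>2 \<partial>lborel)"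
    by (rule Bochner_Integration.integral_nonneg) simp
  also have "\<dots> = (\<integral>x. ?U x * (h x)\<^sup>2 \<partial>lborel) - 2 * (\<Sum>n\<in>N. c n * c n)
     + (\<Sum>n\<in>N. \<Sum>k\<in>N. c n * c k * (if n = k then 1 else 0))"
    unfolding expand using i1 i2 i3
    by (simp add: Bochner_Integration.integral_add Bochner_Integration.integral_diff
        integral_sum integral_mult_right rademacher_step_orthonormal c_def)
  also have "\<dots> = (\<integral>x. ?U x * (h x)\<^sup>2 \<partial>lborel) - (\<Sum>n\<in>N. (c n)\<^sup>2)"
    using N by (simp add: power2_eq_square if_distrib sum.delta cong: if_cong)
  finally show ?thesis by simp
qed

lemma rademacher_step_coeff_tendsto_zero_bounded:
  fixes h :: "real \<Rightarrow> real"
  assumes hm[measurable]: "h \<in> borel_measurable lborel" and hb: "\<And>x. \<bar>h x\<bar> \<le> B"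
  shows "(\<lambda>n. \<integral>x. indicator {0..<1} x * (h x * rademacher_step n x) \<partial>lborel) \<longlonglongrightarrow> 0"
proof -
  define c where "c n = (\<integral>x. indicator {0..<1} x * (h x * rademacher_step n x) \<partial>lborel)" for n
  have "summable (\<lambda>n. (c n)\<^sup>2)"
    by (rule bounded_imp_summable[where B="\<integral>x. indicator {0..<1} x * (h x)\<^sup>2 \<partial>lborel"])
      (use bessel_rademacher_step[OF hm hb] in \<open>simp_all add: c_def\<close>)
  then have "(\<lambda>n. sqrt ((c n)\<^sup>2)) \<longlonglongrightarrow> sqrt 0"
    by (intro tendsto_real_sqrt summable_LIMSEQ_zero)
  then show ?thesis by (simp add: tendsto_rabs_zero_iff flip: c_def)
qed

lemma truncation_L1_approx:
  fixes f :: "real \<Rightarrow> real"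
  assumes fi: "integrable lborel f" and e: "0 < e"
  obtains M :: nat where "(\<integral>x. \<bar>f x - max (- real M) (min (f x) (real M))\<bar> \<partial>lborel) < e"
proof -
  have fm[measurable]: "f \<in> borel_measurable lborel" using fi by auto
  define s where "s M x = max (- real M) (min (f x) (real M))" for M :: nat and x
  have sm[measurable]: "s M \<in> borel_measurable lborel" for M
    unfolding s_def by measurable
  have "(\<lambda>M. \<integral>x. \<bar>f x - s M x\<bar> \<partial>lborel) \<longlonglongrightarrow> (\<integral>x. 0 \<partial>(lborel :: real measure))"
  proof (rule integral_dominated_convergence[where w="\<lambda>x. \<bar>f x\<bar>"])
    show "AE x in lborel. (\<lambda>M. \<bar>f x - s M x\<bar>) \<longlonglongrightarrow> 0"
    proof (rule AE_I2)
      fix x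
      obtain M0 :: nat where "\<bar>f x\<bar> \<le> real M0" using real_arch_simple by blast
      then have "\<forall>M\<ge>M0. \<bar>f x - s M x\<bar> = 0"
        by (auto simp: s_def dest!: order_trans[OF _ of_nat_mono])
      then show "(\<lambda>M. \<bar>f x - s M x\<bar>) \<longlonglongrightarrow> 0"
        by (intro tendsto_eventually) (auto simp: eventually_sequentially)
    qed
  qed (use fi in \<open>auto simp: s_def\<close>)
  from LIMSEQ_D[OF this e] show ?thesis
    using that by (auto simp: s_def)
qed

(* Riemann-Lebesgue lemma for Rademacher functions: truncate f at height M; the bounded
   part has vanishing coefficients, the remainder is small in L^1 uniformly in n. *)
lemma rademacher_step_coeff_tendsto_zero:
  fixes f :: "real \<Rightarrow> real"
  assumes fi: "integrable lborel f"
  shows "(\<lambda>n. \<integral>x. indicator {0..<1} x * (f x * rademacher_step n x) \<partial>lborel) \<longlonglongrightarrow> 0"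
proof (rule LIMSEQ_I)
  fix e :: real assume e: "0 < e"
  have fm[measurable]: "f \<in> borel_measurable lborel" using fi by auto
  obtain M :: nat where M: "(\<integral>x. \<bar>f x - max (- real M) (min (f x) (real M))\<bar> \<partial>lborel) < e / 2"
    using truncation_L1_approx[OF fi, of "e / 2"] e by auto
  define h where "h x = max (- real M) (min (f x) (real M))" for x
  have hm[measurable]: "h \<in> borel_measurable lborel" unfolding h_def by measurable
  have h_le: "\<bar>h x\<bar> \<le> \<bar>f x\<bar>" and err_le: "\<bar>f x - h x\<bar> \<le> \<bar>f x\<bar>" for x
    by (auto simp: h_def)
  have "(\<lambda>n. \<integral>x. indicator {0..<1} x * (h x * rademacher_step n x) \<partial>lborel) \<longlonglongrightarrow> 0"
    by (rule rademacher_step_coeff_tendsto_zero_bounded[where B="real M"]) (auto simp: h_def)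
  from LIMSEQ_D[OF this, of "e / 2"] e obtain N
    where N: "\<And>n. n \<ge> N \<Longrightarrow> \<bar>\<integral>x. indicator {0..<1} x * (h x * rademacher_step n x) \<partial>lborel\<bar> < e / 2"
    by auto
  have "\<bar>\<integral>x. indicator {0..<1} x * (f x * rademacher_step n x) \<partial>lborel\<bar> < e" if "n \<ge> N" for n
  proof -
    let ?c = "\<lambda>u. \<integral>x. indicator {0..<1} x * (u x * rademacher_step n x) \<partial>lborel"
    have integrable_coeff: "integrable lborel (\<lambda>x. indicator {0..<1} x * (u x * rademacher_step n x))"
      if [measurable]: "u \<in> borel_measurable lborel" "\<And>x. \<bar>u x\<bar> \<le> \<bar>f x\<bar>" for u
      by (rule Bochner_Integration.integrable_bound[OF fi])
        (use that in \<open>auto simp: indicator_def abs_mult\<close>)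
    have "\<bar>?c f - ?c h\<bar>
        = \<bar>\<integral>x. indicator {0..<1} x * ((f x - h x) * rademacher_step n x) \<partial>lborel\<bar>"
      using integrable_coeff[OF fm] integrable_coeff[OF hm h_le] by (simp add: algebra_simps)
    also have "\<dots> \<le> (\<integral>x. \<bar>indicator {0..<1} x * ((f x - h x) * rademacher_step n x)\<bar> \<partial>lborel)"
      by (rule integral_abs_bound)
    also have "\<dots> \<le> (\<integral>x. \<bar>f x - h x\<bar> \<partial>lborel)"
      using fi by (intro integral_mono integrable_coeff integrable_abs Bochner_Integration.integrable_diff
          Bochner_Integration.integrable_bound[OF fi])
        (auto simp: indicator_def abs_mult h_le err_le)
    also have "\<dots> < e / 2" using M by (simp add: h_def)
    finally show ?thesis using N[OF that] by linarith
  qed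
  then show "\<exists>N. \<forall>n\<ge>N. norm ((\<integral>x. indicator {0..<1} x * (f x * rademacher_step n x) \<partial>lborel) - 0) < e"
    by auto
qed

lemma dyadic_halves:
  assumes A: "A \<in> dyadic_sets m" and "m < n"
  shows "A \<inter> even_cells n \<in> dyadic_sets n" "A \<inter> odd_cells n \<in> dyadic_sets n"
    and "A = (A \<inter> even_cells n) \<union> (A \<inter> odd_cells n)"
    and "(A \<inter> even_cells n) \<inter> (A \<inter> odd_cells n) = {}"
proof -
  have unit: "dyadic_index 0 x = 0" if "x \<in> A" for x
    using that dyadic_sets_subset_unit[OF A] dyadic_index_0_eq_0_iff by blast
  have "A \<inter> even_cells n = A \<inter> {x. even (dyadic_index n x)}"
    and "A \<inter> odd_cells n = A \<inter> {x. odd (dyadic_index n x)}"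
    using unit by (auto simp: even_cells_def odd_cells_def)
  then show "A \<inter> even_cells n \<in> dyadic_sets n" "A \<inter> odd_cells n \<in> dyadic_sets n"
    using dyadic_sets_refine[OF A less_imp_le[OF \<open>m < n\<close>], where P=even]
      dyadic_sets_refine[OF A less_imp_le[OF \<open>m < n\<close>], where P=odd]
    by simp_all
  show "A = (A \<inter> even_cells n) \<union> (A \<inter> odd_cells n)"
    using unit by (auto simp: even_cells_def odd_cells_def)
  show "(A \<inter> even_cells n) \<inter> (A \<inter> odd_cells n) = {}"
    by (auto simp: even_cells_def odd_cells_def)
qed

(* The halves have equal measure, since translation by 2^-n maps one onto the other. *)
lemma measure_dyadic_halves:
  assumes A: "A \<in> dyadic_sets m" and "m < n"
  shows "measure lborel (A \<inter> even_cells n) = measure lborel A / 2"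
    and "measure lborel (A \<inter> odd_cells n) = measure lborel A / 2"
proof -
  have A_meas[measurable]: "A \<in> sets lborel" using A by (rule dyadic_sets_measurable)
  have as_integral: "measure lborel (A \<inter> C) = (\<integral>x. indicator C x * indicator A x \<partial>lborel)"
    for C :: "real set"
  proof -
    have "measure lborel (A \<inter> C) = (\<integral>x. indicator (A \<inter> C) x \<partial>lborel)"
      by (simp add: space_borel)
    also have "\<dots> = (\<integral>x. indicator C x * indicator A x \<partial>lborel)"
      by (rule Bochner_Integration.integral_cong) (simp_all add: indicator_inter_arith mult.commute)
    finally show ?thesis .
  qed
  obtain J where J: "A = {x. dyadic_index m x \<in> int ` J}"
    using A by (rule dyadic_sets_index_form)
  have "indicator A (x + 1 / 2 ^ n) = (indicator A x :: real)" if "even (dyadic_index n x)" for x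
    using dyadic_index_shift_coarser[OF \<open>m < n\<close> that] by (simp add: J indicator_def)
  then have equal: "measure lborel (A \<inter> odd_cells n) = measure lborel (A \<inter> even_cells n)"
    unfolding as_integral using \<open>m < n\<close> by (intro integral_odd_cells_eq_even_cells) auto
  have finite: "emeasure lborel (A \<inter> C) \<noteq> \<infinity>" for C
    using dyadic_sets_subset_unit[OF A]
    by (intro less_imp_neq emeasure_bounded_finite bounded_subset[OF bounded_closed_interval[of 0 1]]) auto
  have "measure lborel A = measure lborel (A \<inter> even_cells n) + measure lborel (A \<inter> odd_cells n)"
    using dyadic_halves(3,4)[OF A \<open>m < n\<close>] finite
    by (metis measure_Union A_meas even_cells_measurable odd_cells_measurable sets.Int)
  then show "measure lborel (A \<inter> even_cells n) = measure lborel A / 2"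
    and "measure lborel (A \<inter> odd_cells n) = measure lborel A / 2"
    using equal by simp_all
qed

lemma set_integral_cells:
  fixes g :: "real \<Rightarrow> real"
  assumes A: "A \<subseteq> {0..<1}" and g: "set_integrable lborel A g"
  shows "(\<integral>x\<in>A \<inter> even_cells n. g x \<partial>lborel) + (\<integral>x\<in>A \<inter> odd_cells n. g x \<partial>lborel)
           = (\<integral>x\<in>A. g x \<partial>lborel)"
    and "(\<integral>x\<in>A \<inter> even_cells n. g x \<partial>lborel) - (\<integral>x\<in>A \<inter> odd_cells n. g x \<partial>lborel)
           = (\<integral>x. indicator {0..<1} x * ((indicator A x * g x) * rademacher_step n x) \<partial>lborel)"
proof -
  define f where "f = (\<lambda>x. indicator A x * g x)"
  have fi: "integrable lborel f" using g by (simp add: set_integrable_def f_def)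
  have cells: "(\<integral>x\<in>A \<inter> C. g x \<partial>lborel) = (\<integral>x. indicator C x * f x \<partial>lborel)" for C
    by (simp add: set_lebesgue_integral_def f_def indicator_inter_arith mult_ac)
  have integrable_cell: "integrable lborel (\<lambda>x. indicator C x * f x)" if [measurable]: "C \<in> sets lborel" for C
    using integrable_mult_indicator[OF that fi] by simp
  have unit: "indicator {0..<1} x * (indicator A x * g x) = indicator A x * g x" for x
    using A by (auto simp: f_def indicator_def)
  show "(\<integral>x\<in>A \<inter> even_cells n. g x \<partial>lborel) + (\<integral>x\<in>A \<inter> odd_cells n. g x \<partial>lborel)
      = (\<integral>x\<in>A. g x \<partial>lborel)"
    unfolding cells using integrable_cell[OF even_cells_measurable] integrable_cell[OF odd_cells_measurable]
    by (simp flip: Bochner_Integration.integral_add distrib_right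
        add: indicator_cells_add unit set_lebesgue_integral_def f_def)
  show "(\<integral>x\<in>A \<inter> even_cells n. g x \<partial>lborel) - (\<integral>x\<in>A \<inter> odd_cells n. g x \<partial>lborel)
      = (\<integral>x. indicator {0..<1} x * ((indicator A x * g x) * rademacher_step n x) \<partial>lborel)"
  proof -
    have "(\<integral>x. indicator (even_cells n) x * f x \<partial>lborel) - (\<integral>x. indicator (odd_cells n) x * f x \<partial>lborel)
        = (\<integral>x. indicator (even_cells n) x * f x - indicator (odd_cells n) x * f x \<partial>lborel)"
      using integrable_cell[OF even_cells_measurable] integrable_cell[OF odd_cells_measurable] by simp
    also have "\<dots> = (\<integral>x. indicator {0..<1} x * (f x * rademacher_step n x) \<partial>lborel)"
      unfolding left_diff_distrib[symmetric] indicator_cells_diff by (simp add: mult_ac)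
    finally show ?thesis unfolding cells by (simp add: f_def)
  qed
qed

lemma AE_rademacher_on_cells:
  shows "AE x in lborel. x \<in> even_cells n \<longrightarrow> rademacher n x = 1"
    and "AE x in lborel. x \<in> odd_cells n \<longrightarrow> rademacher n x = -1"
  using AE_rademacher_eq_step[of n]
  by (auto elim!: eventually_mono simp: even_cells_def odd_cells_def rademacher_step_def)

lemma balanced_split_bounds:
  fixes I0 I1 lam J :: real
  assumes lam: "0 < lam" and nonneg: "0 \<le> I0" "0 \<le> I1"
    and balanced: "\<bar>I0 - I1\<bar> \<le> (1 - lam) * (I0 + I1)" and J: "J \<in> {I0, I1}"
  shows "lam / 2 * (I0 + I1) \<le> J \<and> J \<le> 1 / (2 * lam) * (I0 + I1)"
proof
  show "lam / 2 * (I0 + I1) \<le> J" using J balanced by (auto simp: algebra_simps)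
  have "lam * (2 - lam) \<le> 1"
    using sum_squares_ge_zero[of "1 - lam" 0] by (simp add: algebra_simps power2_eq_square)
  then have "(2 - lam) / 2 \<le> 1 / (2 * lam)" using lam by (simp add: field_simps)
  then have "(2 - lam) / 2 * (I0 + I1) \<le> 1 / (2 * lam) * (I0 + I1)"
    using nonneg by (intro mult_right_mono) auto
  moreover have "J \<le> (2 - lam) / 2 * (I0 + I1)" using J balanced by (auto simp: algebra_simps)
  ultimately show "J \<le> 1 / (2 * lam) * (I0 + I1)" by linarith
qed

lemma balanced_dyadic_halving:
  fixes g :: "real \<Rightarrow> real"
  assumes A: "A \<in> dyadic_sets m" and "m < n" and g: "set_integrable lborel A g"
    and g_nonneg: "\<And>x. x \<in> A \<Longrightarrow> 0 \<le> g x" and lam: "0 < lam"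
    and small: "0 < (\<integral>x\<in>A. g x \<partial>lborel) \<Longrightarrow>
      \<bar>\<integral>x. indicator {0..<1} x * ((indicator A x * g x) * rademacher_step n x) \<partial>lborel\<bar>
        \<le> (1 - lam) * (\<integral>x\<in>A. g x \<partial>lborel)"
  shows "\<exists>A0 A1. A0 \<in> dyadic_sets n \<and> A1 \<in> dyadic_sets n \<and>
        A = A0 \<union> A1 \<and> A0 \<inter> A1 = {} \<and>
        measure lborel A0 = measure lborel A / 2 \<and>
        measure lborel A1 = measure lborel A / 2 \<and>
        (\<forall>B\<in>{A0, A1}.
           lam / 2 * (\<integral>x\<in>A. g x \<partial>lborel) \<le> (\<integral>x\<in>B. g x \<partial>lborel) \<and>
           (\<integral>x\<in>B. g x \<partial>lborel) \<le> 1 / (2 * lam) * (\<integral>x\<in>A. g x \<partial>lborel)) \<and>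
        (AE x in lborel. x \<in> A0 \<longrightarrow> rademacher n x = 1) \<and>
        (AE x in lborel. x \<in> A1 \<longrightarrow> rademacher n x = -1)"
proof -
  define A0 A1 where "A0 = A \<inter> even_cells n" and "A1 = A \<inter> odd_cells n"
  let ?I = "\<lambda>B. \<integral>x\<in>B. g x \<partial>lborel"
  note split = set_integral_cells[OF dyadic_sets_subset_unit[OF A] g, of n, folded A0_def A1_def]
  have nonneg: "0 \<le> ?I A0" "0 \<le> ?I A1"
    unfolding A0_def A1_def set_lebesgue_integral_def using g_nonneg
    by (auto intro!: Bochner_Integration.integral_nonneg simp: indicator_def)
  have balanced: "\<bar>?I A0 - ?I A1\<bar> \<le> (1 - lam) * (?I A0 + ?I A1)"
  proof (cases "0 < ?I A")
    case True
    then show ?thesis using small split by simp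
  next
    case False
    then have "?I A0 = 0" "?I A1 = 0" using split(1) nonneg by linarith+
    then show ?thesis by simp
  qed
  have "\<forall>B\<in>{A0, A1}. lam / 2 * ?I A \<le> ?I B \<and> ?I B \<le> 1 / (2 * lam) * ?I A"
    using balanced_split_bounds[OF lam nonneg balanced] split(1) by auto
  moreover have "AE x in lborel. x \<in> A0 \<longrightarrow> rademacher n x = 1"
    by (rule eventually_mono[OF AE_rademacher_on_cells(1)[of n]]) (simp add: A0_def)
  moreover have "AE x in lborel. x \<in> A1 \<longrightarrow> rademacher n x = -1"
    by (rule eventually_mono[OF AE_rademacher_on_cells(2)[of n]]) (simp add: A1_def)
  ultimately show ?thesis
    using dyadic_halves[OF A \<open>m < n\<close>, folded A0_def A1_def]
      measure_dyadic_halves[OF A \<open>m < n\<close>, folded A0_def A1_def]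
    by blast
qed

theorem lemma3p1:
  fixes g :: "real \<Rightarrow> real" and m :: nat and A :: "real set" and lam :: real
  assumes "set_integrable lborel {0..1} g"
    and "\<forall>x\<in>{0..1}. g x \<ge> 0"
    and "A \<in> dyadic_sets m"
    and "0 < lam" and "lam < 1"
  shows "\<exists>n_lam::nat. n_lam > m \<and>
    (\<forall>n\<ge>n_lam. \<exists>A0 A1. A0 \<in> dyadic_sets n \<and> A1 \<in> dyadic_sets n \<and>
        A = A0 \<union> A1 \<and> A0 \<inter> A1 = {} \<and>
        measure lborel A0 = measure lborel A / 2 \<and>
        measure lborel A1 = measure lborel A / 2 \<and>
        (\<forall>B\<in>{A0, A1}.
           lam / 2 * (\<integral>x\<in>A. g x \<partial>lborel) \<le> (\<integral>x\<in>B. g x \<partial>lborel) \<and>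
           (\<integral>x\<in>B. g x \<partial>lborel) \<le> 1 / (2 * lam) * (\<integral>x\<in>A. g x \<partial>lborel)) \<and>
        (AE x in lborel. x \<in> A0 \<longrightarrow> rademacher n x = 1) \<and>
        (AE x in lborel. x \<in> A1 \<longrightarrow> rademacher n x = -1))"
proof -
  note A = assms(3) and lam = assms(4,5)
  have A_unit: "A \<subseteq> {0..<1}" using A by (rule dyadic_sets_subset_unit)
  have gA: "set_integrable lborel A g"
    using A_unit by (intro set_integrable_subset[OF assms(1) dyadic_sets_measurable[OF A]]) auto
  have g_nonneg: "0 \<le> g x" if "x \<in> A" for x
    using that A_unit assms(2) by auto
  let ?I = "\<integral>x\<in>A. g x \<partial>lborel"
  let ?c = "\<lambda>n. \<integral>x. indicator {0..<1} x * ((indicator A x * g x) * rademacher_step n x) \<partial>lborel"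
  have "(\<lambda>n. \<bar>?c n\<bar>) \<longlonglongrightarrow> 0"
    using gA by (simp add: tendsto_rabs_zero_iff rademacher_step_coeff_tendsto_zero set_integrable_def)
  then have "\<forall>\<^sub>F n in sequentially. 0 < ?I \<longrightarrow> \<bar>?c n\<bar> < (1 - lam) * ?I"
    using lam by (cases "0 < ?I") (auto intro: order_tendstoD(2))
  then obtain N where N: "\<And>n. N \<le> n \<Longrightarrow> 0 < ?I \<longrightarrow> \<bar>?c n\<bar> < (1 - lam) * ?I"
    by (auto simp: eventually_sequentially)
  show ?thesis
    using balanced_dyadic_halving[OF A _ gA g_nonneg lam(1)] N
    by (intro exI[of _ "max (Suc m) N"]) (auto simp: less_imp_le)
qed

end
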